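(* There exists a constant $C>0$ such that for all $\theta>0$ and all real $\delta$ with $|\delta|\le\theta/3$, \[\Big|f(\theta+\delta)-f(\theta)-\delta f'(\theta)-\frac{\delta^2}{2}f''(\theta)\Big|\le C\,\theta^{-2}|\delta|^3e^{-\theta},\qquad \big|j(\theta+\delta)-j(\theta)-\delta j'(\theta)\big|\le C\,\theta^{-2}\delta^2e^{-\theta}.\]
   Context: Define $\lambda:[0,\infty)\to(0,1/4]$ by $\lambda(0)=1/4$ and, for $\theta>0$, $\lambda(\theta)$ is the unique $\lambda\in(0,1/4)$ with $-1+\frac{\operatorname{artanh}(\sqrt{1-4\lambda})}{\sqrt{1-4\lambda}}=\theta$. For $\theta>0$ set $f(\theta)=-\ln\lambda(\theta)-2\theta-\theta\ln(1-4\lambda(\theta))$ and $j(\theta)=-\tfrac12\ln(1-4(\theta+1)\lambda(\theta))+\tfrac12\ln 2$. *)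

theory Defs
  imports "HOL-Analysis.Analysis"
begin

definition lam :: "real \<Rightarrow> real" where
  "lam \<theta> = (if \<theta> = 0 then 1/4 else
     (THE l. 0 < l \<and> l < 1/4 \<and>
        -1 + artanh (sqrt (1 - 4*l)) / sqrt (1 - 4*l) = \<theta>))"

definition fF :: "real \<Rightarrow> real" where
  "fF \<theta> = - ln (lam \<theta>) - 2*\<theta> - \<theta> * ln (1 - 4 * lam \<theta>)"

definition jJ :: "real \<Rightarrow> real" where
  "jJ \<theta> = - (1/2) * ln (1 - 4*(\<theta>+1) * lam \<theta>) + (1/2) * ln 2"

end

theory Submission
  imports Defs
begin

(* Substituting sqrt (1 - 4 \<lambda>) = tanh u turns the equation defining \<lambda>(\<theta>) into
   \<theta> = u coth u - 1, with \<lambda> = 1 / (4 cosh\<^sup>2 u). The function L = 4 \<lambda> (ell below) satisfies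
   L' = -2 L (1 - L) / (1 - (\<theta> + 1) L), so all derivatives of f and j are rational in \<theta> and L.
   Elementary hyperbolic inequalities give 1 - L \<le> 3 \<theta>, L \<le> 4 e^(-2 \<theta>) and
   1 - (\<theta> + 1) L \<ge> 2 \<theta> / (1 + 2 \<theta>), hence |f'''|, |j''| \<le> K \<theta>^(-2) e^(-3 \<theta> / 2).
   Taylor's theorem, with the Lagrange point \<xi> \<ge> 2 \<theta> / 3, converts this into the claim. *)

lemma nondecreasing_from_0:
  fixes f f' :: "real \<Rightarrow> real"
  assumes "\<And>t. 0 \<le> t \<Longrightarrow> (f has_real_derivative f' t) (at t)"
    and "\<And>t. 0 \<le> t \<Longrightarrow> 0 \<le> f' t" and "0 \<le> x"
  shows "f 0 \<le> f x"
  by (rule DERIV_nonneg_imp_nondecreasing[OF assms(3)]) (use assms in auto)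

lemma sinh_ge_self: "0 \<le> (x::real) \<Longrightarrow> x \<le> sinh x"
  using real_le_x_sinh[of x] by (simp add: sinh_field_def exp_minus)

lemma cosh_ge_quadratic: "0 \<le> (x::real) \<Longrightarrow> 1 + x^2/2 \<le> cosh x"
proof -
  assume x: "0 \<le> x"
  have "(\<lambda>t. cosh t - 1 - t^2/2) 0 \<le> (\<lambda>t. cosh t - 1 - t^2/2) x"
    by (rule nondecreasing_from_0[where f'="\<lambda>t. sinh t - t"])
       (auto intro!: derivative_eq_intros simp: sinh_ge_self x)
  then show ?thesis by simp
qed

lemma sinh_ge_cubic: "0 \<le> (x::real) \<Longrightarrow> x + x^3/6 \<le> sinh x"
proof -
  assume x: "0 \<le> x"
  have "(\<lambda>t. sinh t - t - t^3/6) 0 \<le> (\<lambda>t. sinh t - t - t^3/6) x"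
    by (rule nondecreasing_from_0[where f'="\<lambda>t. cosh t - 1 - t^2/2"])
       (auto intro!: derivative_eq_intros simp: x dest!: cosh_ge_quadratic)
  then show ?thesis by simp
qed

lemma mult_cosh_minus_sinh_ge: "0 \<le> (x::real) \<Longrightarrow> x^3/3 \<le> x * cosh x - sinh x"
proof -
  assume x: "0 \<le> x"
  have "(\<lambda>t. t * cosh t - sinh t - t^3/3) 0 \<le> (\<lambda>t. t * cosh t - sinh t - t^3/3) x"
  proof (rule nondecreasing_from_0[where f'="\<lambda>t. t * (sinh t - t)"])
    show "0 \<le> t * (sinh t - t)" if "0 \<le> t" for t :: real
      using that sinh_ge_self[OF that] by simp
  qed (auto intro!: derivative_eq_intros simp: x algebra_simps power2_eq_square)
  then show ?thesis by simp
qed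

lemma mult_cosh_minus_sinh_le: "0 \<le> (x::real) \<Longrightarrow> x * cosh x - sinh x \<le> x^2 * sinh x / 3"
proof -
  assume x: "0 \<le> x"
  have "(\<lambda>t. t^2 * sinh t / 3 - t * cosh t + sinh t) 0 \<le> (\<lambda>t. t^2 * sinh t / 3 - t * cosh t + sinh t) x"
  proof (rule nondecreasing_from_0[where f'="\<lambda>t. t / 3 * (t * cosh t - sinh t)"])
    show "((\<lambda>t. t^2 * sinh t / 3 - t * cosh t + sinh t) has_real_derivative
        t / 3 * (t * cosh t - sinh t)) (at t)" for t :: real
      by (rule derivative_eq_intros refl | simp)+ (simp add: algebra_simps power2_eq_square)
    show "0 \<le> t / 3 * (t * cosh t - sinh t)" if "0 \<le> t" for t :: real
    proof -
      have "0 \<le> t * cosh t - sinh t"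
        using mult_cosh_minus_sinh_ge[OF that] zero_le_power[OF that, of 3] by linarith
      with that show ?thesis by simp
    qed
  qed (use x in auto)
  then show ?thesis by simp
qed

lemma tanh_plus_cube_le: "0 \<le> (x::real) \<Longrightarrow> tanh x + tanh x ^ 3 / 3 \<le> x"
proof -
  assume x: "0 \<le> x"
  have "(\<lambda>t. t - tanh t - tanh t ^ 3 / 3) 0 \<le> (\<lambda>t. t - tanh t - tanh t ^ 3 / 3) x"
  proof (rule nondecreasing_from_0[where f'="\<lambda>t. tanh t ^ 4"])
    show "((\<lambda>t. t - tanh t - tanh t ^ 3 / 3) has_real_derivative tanh t ^ 4) (at t)" for t :: real
      by (rule derivative_eq_intros refl | simp)+
         (simp add: algebra_simps power2_eq_square power3_eq_cube power4_eq_xxxx)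
  qed (use x in auto)
  then show ?thesis by simp
qed

lemma sinh_mult_cosh_gt: "0 < u \<Longrightarrow> u < sinh u * cosh (u::real)"
proof -
  assume u: "0 < u"
  have "2*u + 4*u^3/3 \<le> 2 * sinh u * cosh u"
    using sinh_ge_cubic[of "2*u"] u by (simp add: sinh_double)
  with zero_less_power[OF u, of 3] show ?thesis by linarith
qed

lemma tanh_artanh_real: "-1 < x \<Longrightarrow> x < 1 \<Longrightarrow> tanh (artanh x) = (x::real)"
proof -
  assume x: "-1 < x" "x < 1"
  define e where "e = exp (- 2 * artanh x)"
  have e: "e = (1 - x) / (1 + x)"
    using x by (simp add: e_def artanh_def exp_minus)
  show ?thesis
    unfolding tanh_real_altdef e_def[symmetric] e using x by (simp add: field_simps)
qed

lemma one_plus_power_le_exp: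
  assumes "0 \<le> x" "0 < k"
  shows "(1 + x) ^ k \<le> (4 * real k) ^ k * exp (x / 4)"
proof -
  have "1 + x \<le> 4 * real k * (1 + x / (4 * real k))"
    using assms by (simp add: field_simps)
  also have "\<dots> \<le> 4 * real k * exp (x / (4 * real k))"
    using exp_ge_add_one_self[of "x / (4 * real k)"] assms by simp
  finally have "(1 + x) ^ k \<le> (4 * real k * exp (x / (4 * real k))) ^ k"
    by (rule power_mono) (use assms in simp)
  also have "\<dots> = (4 * real k) ^ k * exp (x / 4)"
    using assms by (simp add: power_mult_distrib exp_of_nat_mult[symmetric])
  finally show ?thesis .
qed

lemma taylor_remainder_bound:
  fixes g :: "nat \<Rightarrow> real \<Rightarrow> real"
  assumes n: "0 < n"
    and D: "\<And>m t. m < n \<Longrightarrow> 0 < t \<Longrightarrow> (g m has_real_derivative g (Suc m) t) (at t)"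
    and B: "\<And>t. 0 < t \<Longrightarrow> \<bar>g n t\<bar> \<le> K / t^2 * exp (-3 * t / 2)"
    and \<theta>: "0 < \<theta>" and \<delta>: "\<bar>\<delta>\<bar> \<le> \<theta> / 3"
  shows "\<bar>g 0 (\<theta> + \<delta>) - (\<Sum>m<n. g m \<theta> / fact m * \<delta>^m)\<bar>
    \<le> 9/4 * K / fact n * \<theta> powr (-2) * \<bar>\<delta>\<bar>^n * exp (-\<theta>)"
proof (cases "\<delta> = 0")
  case True
  then show ?thesis
    using n by (cases n) (simp_all add: sum.lessThan_Suc_shift)
next
  case False
  have "0 \<le> K / \<theta>^2 * exp (-3 * \<theta> / 2)"
    using B[OF \<theta>] abs_ge_zero[of "g n \<theta>"] by linarith
  then have K: "0 \<le> K"
    using \<theta> by (simp add: zero_le_mult_iff zero_le_divide_iff)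
  have "\<exists>\<xi>. (if \<theta> + \<delta> < \<theta> then \<theta> + \<delta> < \<xi> \<and> \<xi> < \<theta>
                  else \<theta> < \<xi> \<and> \<xi> < \<theta> + \<delta>) \<and>
      g 0 (\<theta> + \<delta>) = (\<Sum>m<n. g m \<theta> / fact m * (\<theta> + \<delta> - \<theta>)^m)
        + g n \<xi> / fact n * (\<theta> + \<delta> - \<theta>)^n"
    by (rule Taylor[where a="2 * \<theta> / 3" and b="4 * \<theta> / 3"])
       (use n \<delta> \<theta> False in \<open>auto intro!: D simp: abs_le_iff\<close>)
  then obtain \<xi> where \<xi>: "if \<theta> + \<delta> < \<theta> then \<theta> + \<delta> < \<xi> \<and> \<xi> < \<theta> else \<theta> < \<xi> \<and> \<xi> < \<theta> + \<delta>"
    and taylor: "g 0 (\<theta> + \<delta>) = (\<Sum>m<n. g m \<theta> / fact m * \<delta>^m) + g n \<xi> / fact n * \<delta>^n"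
    by auto
  have \<xi>_ge: "2 * \<theta> / 3 \<le> \<xi>"
    using \<xi> \<delta> by (auto simp: abs_le_iff split: if_splits)
  have "K / \<xi>^2 \<le> K / (2 * \<theta> / 3)^2"
    using \<xi>_ge \<theta> K by (intro divide_left_mono power_mono) auto
  moreover have "exp (-3 * \<xi> / 2) \<le> exp (-\<theta>)"
    using \<xi>_ge by simp
  ultimately have "K / \<xi>^2 * exp (-3 * \<xi> / 2) \<le> K / (2 * \<theta> / 3)^2 * exp (-\<theta>)"
    using K by (intro mult_mono) auto
  with B[of \<xi>] \<xi>_ge \<theta> have remainder: "\<bar>g n \<xi>\<bar> \<le> K / (2 * \<theta> / 3)^2 * exp (-\<theta>)"
    by simp
  have "\<bar>g 0 (\<theta> + \<delta>) - (\<Sum>m<n. g m \<theta> / fact m * \<delta>^m)\<bar> = \<bar>g n \<xi>\<bar> / fact n * \<bar>\<delta>\<bar>^n"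
    unfolding taylor by (simp add: abs_mult power_abs)
  also have "\<dots> \<le> K / (2 * \<theta> / 3)^2 * exp (-\<theta>) / fact n * \<bar>\<delta>\<bar>^n"
    using remainder by (intro mult_right_mono divide_right_mono) auto
  also have "\<dots> = 9/4 * K / fact n * \<theta> powr (-2) * \<bar>\<delta>\<bar>^n * exp (-\<theta>)"
    using \<theta> by (simp add: powr_minus powr_numeral power2_eq_square field_simps)
  finally show ?thesis .
qed

definition theta_param :: "real \<Rightarrow> real" where
  "theta_param u = u * cosh u / sinh u - 1"

lemma theta_param_has_derivative:
  "0 < u \<Longrightarrow> (theta_param has_real_derivative (sinh u * cosh u - u) / sinh u ^ 2) (at u)"
  unfolding theta_param_def[abs_def]
  by (rule derivative_eq_intros refl | simp)+
     (simp add: field_simps power2_eq_square cosh_square_eq[unfolded power2_eq_square])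

lemma theta_param_pos: "0 < u \<Longrightarrow> 0 < theta_param u"
proof -
  assume u: "0 < u"
  have "sinh u < u * cosh u"
    using mult_cosh_minus_sinh_ge[of u] zero_less_power[OF u, of 3] u by linarith
  then show ?thesis
    using u by (simp add: theta_param_def field_simps)
qed

lemma theta_param_le_square: "0 < u \<Longrightarrow> theta_param u \<le> u^2 / 3"
  using mult_cosh_minus_sinh_le[of u] by (simp add: theta_param_def field_simps)

lemma theta_param_le: "0 < u \<Longrightarrow> theta_param u \<le> u"
proof -
  assume u: "0 < u"
  have "u * (cosh u - sinh u) \<le> u"
    using u by (simp add: cosh_minus_sinh)
  also have "\<dots> \<le> sinh u"
    using sinh_ge_self[of u] u by simp
  finally show ?thesis
    using u by (simp add: theta_param_def field_simps)
qed

lemma theta_param_ge: "0 < u \<Longrightarrow> u - 1 \<le> theta_param u"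
  using sinh_le_cosh_real[of u] by (simp add: theta_param_def field_simps)

lemma strict_mono_on_theta_param: "strict_mono_on {0<..} theta_param"
proof (rule strict_mono_onI)
  fix a b :: real
  assume a: "a \<in> {0<..}" and "a < b"
  show "theta_param a < theta_param b"
  proof (rule DERIV_pos_imp_increasing[OF \<open>a < b\<close>])
    fix x assume "a \<le> x"
    with a have x: "0 < x" by simp
    have "0 < (sinh x * cosh x - x) / sinh x ^ 2"
      using sinh_mult_cosh_gt[OF x] x by simp
    with theta_param_has_derivative[OF x]
    show "\<exists>y. (theta_param has_real_derivative y) (at x) \<and> 0 < y" by blast
  qed
qed

lemma theta_param_surj: "0 < t \<Longrightarrow> \<exists>u>0. theta_param u = t"
proof -
  assume t: "0 < t"
  define a where "a = min 1 t"
  have a: "0 < a" "a \<le> 1" "a \<le> t"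
    using t by (auto simp: a_def)
  have "theta_param a \<le> a^2 / 3"
    using theta_param_le_square a by simp
  also have "\<dots> \<le> t"
    using a by (simp add: power2_eq_square) (smt (verit) mult_left_le)
  finally have "theta_param a \<le> t" .
  moreover have "t \<le> theta_param (t + 2)"
    using theta_param_ge[of "t + 2"] t by simp
  moreover have "continuous_on {a..t+2} theta_param"
    using a by (intro DERIV_atLeastAtMost_imp_continuous_on)
      (meson theta_param_has_derivative less_le_trans)
  ultimately obtain u where "a \<le> u" "theta_param u = t"
    using IVT'[of theta_param a t "t + 2"] a t by auto
  then show ?thesis
    using a by (intro exI[of _ u]) auto
qed

definition theta_param_inv :: "real \<Rightarrow> real" where
  "theta_param_inv t = (THE u. 0 < u \<and> theta_param u = t)"

lemma theta_param_theta_param_inv: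
  "0 < t \<Longrightarrow> 0 < theta_param_inv t \<and> theta_param (theta_param_inv t) = t"
  unfolding theta_param_inv_def
  by (rule theI') (use theta_param_surj strict_mono_on_eqD[OF strict_mono_on_theta_param] in fastforce)

lemma theta_param_inv_theta_param: "0 < u \<Longrightarrow> theta_param_inv (theta_param u) = u"
  using theta_param_theta_param_inv[OF theta_param_pos[of u]]
    strict_mono_on_eqD[OF strict_mono_on_theta_param] by auto

lemma theta_param_inv_has_derivative:
  assumes u: "0 < u"
  shows "(theta_param_inv has_real_derivative sinh u ^ 2 / (sinh u * cosh u - u)) (at (theta_param u))"
proof -
  have near_u: "0 < z" if "\<bar>z - u\<bar> \<le> u/2" for z
    using that u by linarith
  have "isCont theta_param_inv (theta_param u)"
  proof (rule isCont_inverse_function[where f=theta_param and x=u and d="u/2"])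
    fix z assume "\<bar>z - u\<bar> \<le> u/2"
    with near_u have z: "0 < z" by blast
    show "theta_param_inv (theta_param z) = z"
      using theta_param_inv_theta_param[OF z] .
    show "isCont theta_param z"
      using DERIV_isCont[OF theta_param_has_derivative[OF z]] .
  qed (use u in simp)
  moreover have "theta_param (theta_param_inv y) = y" if "0 < y" for y
    using theta_param_theta_param_inv[OF that] by blast
  ultimately have "(theta_param_inv has_real_derivative inverse ((sinh u * cosh u - u) / sinh u ^ 2))
      (at (theta_param u))"
    using u sinh_mult_cosh_gt[OF u] theta_param_pos[OF u] theta_param_has_derivative[OF u]
    by (intro DERIV_inverse_function[where f=theta_param and a=0 and b="theta_param u + 1"])
       (simp_all add: theta_param_inv_theta_param)
  then show ?thesis
    by simp
qed

lemma sqrt_one_minus_sech_square: "0 < u \<Longrightarrow> sqrt (1 - 4 * (1 / (4 * cosh u ^ 2))) = tanh u"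
proof -
  assume u: "0 < u"
  have "1 - 4 * (1 / (4 * cosh u ^ 2)) = tanh u ^ 2"
    by (simp add: tanh_def field_simps sinh_square_eq)
  then show ?thesis
    using u by simp
qed

lemma lam_equation_unique:
  assumes u: "0 < u" and l: "0 < l" "l < 1/4"
    and eq: "-1 + artanh (sqrt (1 - 4*l)) / sqrt (1 - 4*l) = theta_param u"
  shows "l = 1 / (4 * cosh u ^ 2)"
proof -
  define s where "s = sqrt (1 - 4*l)"
  have s: "0 < s" "s < 1"
    using l by (auto simp: s_def real_sqrt_lt_1_iff)
  define v where "v = artanh s"
  have tanh_v: "tanh v = s"
    using tanh_artanh_real s by (simp add: v_def)
  have v: "0 < v"
    using tanh_v s by (metis tanh_real_pos_iff)
  have "theta_param v = -1 + v / s"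
    using tanh_v v s unfolding theta_param_def tanh_def by (simp add: field_simps)
  with eq have "theta_param v = theta_param u"
    by (simp add: s_def v_def)
  then have "v = u"
    using strict_mono_on_eqD[OF strict_mono_on_theta_param] u v by auto
  then have "1 - 4*l = tanh u ^ 2"
    using tanh_v l by (simp add: s_def)
  then show ?thesis
    by (simp add: tanh_def field_simps sinh_square_eq)
qed

lemma lam_theta_param:
  assumes u: "0 < u"
  shows "lam (theta_param u) = 1 / (4 * cosh u ^ 2)"
proof -
  have "cosh u \<noteq> 1"
    using u by simp
  then have "1 < cosh u"
    using cosh_real_ge_1[of u] by linarith
  then have "1 < cosh u ^ 2"
    by (simp add: one_less_power)
  then have "0 < 1 / (4 * cosh u ^ 2) \<and> 1 / (4 * cosh u ^ 2) < 1/4 \<and>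
      -1 + artanh (sqrt (1 - 4 * (1 / (4 * cosh u ^ 2)))) / sqrt (1 - 4 * (1 / (4 * cosh u ^ 2)))
        = theta_param u"
    unfolding sqrt_one_minus_sech_square[OF u] artanh_tanh_real
    by (simp add: theta_param_def tanh_def field_simps)
  then show ?thesis
    using theta_param_pos[OF u] unfolding lam_def
    by (auto intro!: the_equality lam_equation_unique[OF u])
qed

definition ell :: "real \<Rightarrow> real" where
  "ell t = 4 * lam t"

lemma ell_theta_param: "0 < u \<Longrightarrow> ell (theta_param u) = 1 / cosh u ^ 2"
  by (simp add: ell_def lam_theta_param)

lemma one_minus_ell_theta_param: "0 < u \<Longrightarrow> 1 - ell (theta_param u) = tanh u ^ 2"
  by (simp add: ell_theta_param tanh_def field_simps sinh_square_eq)

lemma gap_theta_param: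
  assumes "0 < u"
  shows "1 - (theta_param u + 1) * ell (theta_param u) = 1 - u / (sinh u * cosh u)"
proof -
  have "theta_param u + 1 = u * cosh u / sinh u"
    by (simp add: theta_param_def)
  then show ?thesis
    using assms by (simp add: ell_theta_param field_simps power2_eq_square)
qed

lemma theta_param_surjE:
  assumes "0 < t"
  obtains u where "0 < u" "t = theta_param u"
  using theta_param_surj[OF assms] by auto

lemma ell_pos: "0 < t \<Longrightarrow> 0 < ell t"
  by (metis theta_param_surjE ell_theta_param cosh_real_pos zero_less_divide_1_iff zero_less_power)

lemma ell_less_1: "0 < t \<Longrightarrow> ell t < 1"
  by (metis theta_param_surjE one_minus_ell_theta_param diff_gt_0_iff_gt
      tanh_real_pos_iff zero_less_power)

lemma one_minus_ell_le: "0 < t \<Longrightarrow> 1 - ell t \<le> 3 * t"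
proof -
  assume "0 < t"
  then obtain u where u: "0 < u" "t = theta_param u"
    by (rule theta_param_surjE)
  have tanh_u: "0 < tanh u" "t + 1 = u / tanh u"
    using u by (auto simp: theta_param_def tanh_def)
  have "tanh u + tanh u ^ 3 / 3 \<le> u"
    using tanh_plus_cube_le u by simp
  then have "tanh u ^ 2 \<le> 3 * (u / tanh u - 1)"
    using tanh_u by (simp add: field_simps power2_eq_square power3_eq_cube)
  then show ?thesis
    using tanh_u u by (simp add: one_minus_ell_theta_param)
qed

lemma ell_le_exp: "0 < t \<Longrightarrow> ell t \<le> 4 * exp (-2 * t)"
proof -
  assume "0 < t"
  then obtain u where u: "0 < u" "t = theta_param u"
    by (rule theta_param_surjE)
  have "(exp u / 2) ^ 2 \<le> cosh u ^ 2"
    by (rule power_mono) (simp_all add: cosh_def)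
  then have "1 / cosh u ^ 2 \<le> 1 / (exp u / 2) ^ 2"
    by (simp add: frac_le)
  also have "\<dots> = 4 * exp (-2 * u)"
    by (simp add: power2_eq_square exp_minus field_simps flip: exp_add)
  also have "\<dots> \<le> 4 * exp (-2 * t)"
    using theta_param_le[OF u(1)] u by simp
  finally show ?thesis
    using u by (simp add: ell_theta_param)
qed

lemma ell_gap_ge: "0 < t \<Longrightarrow> 2 * t / (1 + 2 * t) \<le> 1 - (t + 1) * ell t"
proof -
  assume t: "0 < t"
  then obtain u where u: "0 < u" "t = theta_param u"
    by (rule theta_param_surjE)
  have sc: "0 < sinh u * cosh u"
    using u by simp
  have "u * (1 + 2 * t) \<le> u + 2 * u^3 / 3"
    using theta_param_le_square[OF u(1)] u by (simp add: field_simps power2_eq_square power3_eq_cube)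
  also have "\<dots> \<le> sinh u * cosh u"
    using sinh_ge_cubic[of "2 * u"] u by (simp add: sinh_double)
  finally have "u / (sinh u * cosh u) \<le> 1 / (1 + 2 * t)"
    using sc t by (simp add: field_simps)
  moreover have "1 - (t + 1) * ell t = 1 - u / (sinh u * cosh u)"
    using gap_theta_param[OF u(1)] u(2) by simp
  moreover have "2 * t / (1 + 2 * t) = 1 - 1 / (1 + 2 * t)"
    using t by (simp add: field_simps)
  ultimately show ?thesis
    by linarith
qed

lemma ell_gap_pos: "0 < t \<Longrightarrow> 0 < 1 - (t + 1) * ell t"
  using ell_gap_ge[of t] by (smt (verit) divide_pos_pos)

lemma ell_range:
  assumes "0 < t"
  shows "0 < ell t" "ell t < 1" "0 < 1 - (t + 1) * ell t"
  using ell_pos ell_less_1 ell_gap_pos assms by blast+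

lemma ell_has_derivative:
  assumes "0 < t"
  shows "(ell has_real_derivative -2 * ell t * (1 - ell t) / (1 - (t + 1) * ell t)) (at t)"
proof -
  obtain u where u: "0 < u" "t = theta_param u"
    using assms by (rule theta_param_surjE)
  have sc: "0 < sinh u" "u < sinh u * cosh u"
    using u sinh_mult_cosh_gt by auto
  have L: "ell t = 1 / cosh u ^ 2" and one_minus_L: "1 - ell t = sinh u ^ 2 / cosh u ^ 2"
    and gap: "1 - (t + 1) * ell t = (sinh u * cosh u - u) / (sinh u * cosh u)"
    using u sc ell_theta_param one_minus_ell_theta_param gap_theta_param
    by (simp_all add: tanh_def power_divide diff_divide_distrib)
  have ell_eq: "ell x = 1 / cosh (theta_param_inv x) ^ 2" if "0 < x" for x
    using theta_param_theta_param_inv[OF that] ell_theta_param by metis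
  have "((\<lambda>x. 1 / cosh (theta_param_inv x) ^ 2) has_real_derivative
      - (2 * cosh u * (sinh u * (sinh u ^ 2 / (sinh u * cosh u - u)))) / (cosh u ^ 2) ^ 2) (at t)"
    using theta_param_inv_has_derivative[OF u(1)] theta_param_inv_theta_param[OF u(1)] u(2)
    by (auto intro!: derivative_eq_intros)
  also have "- (2 * cosh u * (sinh u * (sinh u ^ 2 / (sinh u * cosh u - u)))) / (cosh u ^ 2) ^ 2
      = -2 * (1 / cosh u ^ 2) * (sinh u ^ 2 / cosh u ^ 2) / ((sinh u * cosh u - u) / (sinh u * cosh u))"
    using sc by (simp add: divide_simps)
  also have "\<dots> = -2 * ell t * (1 - ell t) / (1 - (t + 1) * ell t)"
    unfolding gap unfolding one_minus_L unfolding L ..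
  finally show ?thesis
    by (rule has_field_derivative_transform_within_open[where S="{0<..}"])
       (simp_all add: assms ell_eq)
qed

lemma fF_ell: "fF = (\<lambda>t. - ln (ell t / 4) - 2 * t - t * ln (1 - ell t))"
  by (simp add: fun_eq_iff fF_def ell_def)

lemma jJ_ell: "jJ = (\<lambda>t. - (1/2) * ln (1 - (t + 1) * ell t) + (1/2) * ln 2)"
  by (simp add: fun_eq_iff jJ_def ell_def algebra_simps)

definition fF_d1 :: "real \<Rightarrow> real" where
  "fF_d1 t = - ln (1 - ell t)"

definition fF_d2 :: "real \<Rightarrow> real" where
  "fF_d2 t = -2 * ell t / (1 - (t + 1) * ell t)"

definition fF_d3 :: "real \<Rightarrow> real" where
  "fF_d3 t = 2 * ell t * (2 - 3 * ell t + (t + 1) * ell t ^ 2) / (1 - (t + 1) * ell t) ^ 3"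

definition jJ_d1 :: "real \<Rightarrow> real" where
  "jJ_d1 t = - ell t * ((t + 1) * (2 - ell t) - 1) / (2 * (1 - (t + 1) * ell t) ^ 2)"

definition jJ_d2 :: "real \<Rightarrow> real" where
  "jJ_d2 t = (let L = ell t; A = 1 - (t + 1) * L; P = (t + 1) * (2 - L) - 1 in
     - L / (2 * A ^ 4) * (-2 * (1 - L) * P * A + (2 - L) * A ^ 2 + 2 * (t + 1) * L * (1 - L) * A
       - 2 * L * P ^ 2))"

lemma fF_has_derivative: "0 < t \<Longrightarrow> (fF has_real_derivative fF_d1 t) (at t)"
proof -
  assume t: "0 < t"
  define L where "L = ell t"
  note range = ell_range[OF t]
  show ?thesis
    unfolding fF_ell fF_d1_def
    apply (rule derivative_eq_intros ell_has_derivative[OF t] refl | (use range in simp; fail))+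
    unfolding L_def[symmetric] using range[folded L_def] apply (simp add: divide_simps)
    apply (simp add: algebra_simps)
    done
qed

lemma fF_d1_has_derivative: "0 < t \<Longrightarrow> (fF_d1 has_real_derivative fF_d2 t) (at t)"
proof -
  assume t: "0 < t"
  note range = ell_range[OF t]
  show ?thesis
    unfolding fF_d1_def[abs_def] fF_d2_def
    by (rule derivative_eq_intros ell_has_derivative[OF t] refl | (use range in simp; fail))+
qed

lemma fF_d2_has_derivative: "0 < t \<Longrightarrow> (fF_d2 has_real_derivative fF_d3 t) (at t)"
proof -
  assume t: "0 < t"
  define L where "L = ell t"
  note range = ell_range[OF t]
  show ?thesis
    unfolding fF_d2_def[abs_def] fF_d3_def
    apply (rule derivative_eq_intros ell_has_derivative[OF t] refl | (use range in simp; fail))+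
    unfolding L_def[symmetric] using range[folded L_def] apply (simp add: divide_simps)
    apply (simp add: algebra_simps power2_eq_square power3_eq_cube)
    done
qed

lemma jJ_has_derivative: "0 < t \<Longrightarrow> (jJ has_real_derivative jJ_d1 t) (at t)"
proof -
  assume t: "0 < t"
  define L where "L = ell t"
  note range = ell_range[OF t]
  show ?thesis
    unfolding jJ_ell jJ_d1_def
    apply (rule derivative_eq_intros ell_has_derivative[OF t] refl | (use range in simp; fail))+
    unfolding L_def[symmetric] using range[folded L_def] apply (simp add: divide_simps)
    apply (simp add: algebra_simps power2_eq_square)
    done
qed

lemma jJ_d1_has_derivative: "0 < t \<Longrightarrow> (jJ_d1 has_real_derivative jJ_d2 t) (at t)"
proof -
  assume t: "0 < t"
  define L where "L = ell t"
  note range = ell_range[OF t]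
  show ?thesis
    unfolding jJ_d1_def[abs_def] jJ_d2_def Let_def
    apply (rule derivative_eq_intros ell_has_derivative[OF t] refl | (use range in simp; fail))+
    unfolding L_def[symmetric] using range[folded L_def] apply (simp add: divide_simps)
    apply (simp add: algebra_simps power2_eq_square power3_eq_cube)
    done
qed

lemma deriv_fF: "0 < t \<Longrightarrow> deriv fF t = fF_d1 t"
  by (rule DERIV_imp_deriv[OF fF_has_derivative])

lemma deriv_deriv_fF: "0 < t \<Longrightarrow> deriv (deriv fF) t = fF_d2 t"
proof -
  assume t: "0 < t"
  have "(deriv fF has_real_derivative fF_d2 t) (at t)"
    by (rule has_field_derivative_transform_within_open[OF fF_d1_has_derivative[OF t], where S="{0<..}"])
       (simp_all add: t deriv_fF)
  then show ?thesis
    by (rule DERIV_imp_deriv)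
qed

lemma deriv_jJ: "0 < t \<Longrightarrow> deriv jJ t = jJ_d1 t"
  by (rule DERIV_imp_deriv[OF jJ_has_derivative])

lemma ell_div_gap_power_le:
  assumes t: "0 < t" and k: "0 < k"
  shows "ell t / (1 - (t + 1) * ell t) ^ k \<le> 4 * (4 * real k) ^ k / (2 * t) ^ k * exp (-3 * t / 2)"
proof -
  define A where "A = 1 - (t + 1) * ell t"
  have A: "2 * t / (1 + 2 * t) \<le> A"
    using ell_gap_ge[OF t] by (simp add: A_def)
  have pos: "0 < 2 * t / (1 + 2 * t)"
    using t by simp
  have A_pos: "0 < A"
    using A pos by linarith
  have "(2 * t / (1 + 2 * t)) ^ k \<le> A ^ k"
    by (rule power_mono[OF A]) (use pos in simp)
  then have "1 / A ^ k \<le> 1 / (2 * t / (1 + 2 * t)) ^ k"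
    using pos A_pos by (intro divide_left_mono) simp_all
  also have "\<dots> = (1 + 2 * t) ^ k / (2 * t) ^ k"
    by (simp add: power_divide)
  also have "\<dots> \<le> (4 * real k) ^ k * exp (t / 2) / (2 * t) ^ k"
    using one_plus_power_le_exp[of "2 * t" k] t k by (simp add: divide_right_mono)
  finally have inv_A: "1 / A ^ k \<le> (4 * real k) ^ k * exp (t / 2) / (2 * t) ^ k" .
  have "ell t / A ^ k = ell t * (1 / A ^ k)"
    by simp
  also have "\<dots> \<le> 4 * exp (-2 * t) * ((4 * real k) ^ k * exp (t / 2) / (2 * t) ^ k)"
    using ell_le_exp[OF t] inv_A ell_pos[OF t] A_pos by (intro mult_mono) auto
  also have "\<dots> = 4 * (4 * real k) ^ k / (2 * t) ^ k * (exp (t / 2) * exp (-2 * t))"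
    by simp
  also have "exp (t / 2) * exp (-2 * t) = exp (-3 * t / 2)"
    by (simp flip: exp_add)
  finally show ?thesis
    by (simp add: A_def)
qed

lemma fF_d3_bound:
  assumes t: "0 < t"
  shows "\<bar>fF_d3 t\<bar> \<le> 12096 / t^2 * exp (-3 * t / 2)"
proof -
  define L where "L = ell t"
  have L: "0 < L" "L < 1" "1 - L \<le> 3 * t"
    using ell_range[OF t] one_minus_ell_le[OF t] by (simp_all add: L_def)
  define N where "N = 2 - 3 * L + (t + 1) * L^2"
  have N_eq: "N = (1 - L) * (2 - L) + t * L^2"
    by (simp add: N_def algebra_simps power2_eq_square)
  have N_nonneg: "0 \<le> N"
    unfolding N_eq using L t by simp
  have "(1 - L) * (2 - L) \<le> 3 * t * 2"
    using L t by (intro mult_mono) simp_all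
  moreover have "t * L^2 \<le> t"
    using L t by (intro mult_left_le power_le_one) simp_all
  ultimately have N_le: "N \<le> 7 * t"
    unfolding N_eq by linarith
  have "\<bar>fF_d3 t\<bar> = 2 * N * (L / (1 - (t + 1) * L) ^ 3)"
    using N_nonneg L ell_gap_pos[OF t] by (simp add: fF_d3_def N_def L_def abs_mult)
  also have "\<dots> \<le> 2 * (7 * t) * (4 * 12^3 / (2 * t)^3 * exp (-3 * t / 2))"
    using ell_div_gap_power_le[OF t, of 3] N_le N_nonneg L t ell_gap_pos[OF t]
    by (intro mult_mono) (simp_all add: L_def)
  also have "\<dots> = 12096 / t^2 * exp (-3 * t / 2)"
    using t by (simp add: field_simps power2_eq_square power3_eq_cube)
  finally show ?thesis .
qed

lemma jJ_d2_numerator_bound: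
  fixes t L A P :: real
  assumes t: "0 < t" and L: "0 < L" "1 - L \<le> 3 * t" and A: "0 < A" "A = 1 - (t + 1) * L"
    and P: "P = (t + 1) * (2 - L) - 1"
  shows "\<bar>-2 * (1 - L) * P * A + (2 - L) * A^2 + 2 * (t + 1) * L * (1 - L) * A - 2 * L * P^2\<bar>
    \<le> 80 * t^2"
proof -
  have tL: "(t + 1) * L < 1" "L \<le> 1"
    using A t L by (simp_all add: algebra_simps) (smt (verit) mult_le_cancel_right1)
  have tL_nonneg: "0 \<le> t * L"
    using t L by simp
  then have A_le: "A \<le> 1 - L" "A \<le> 1"
    using A L by (simp_all add: algebra_simps)
  have P_eq: "P = (1 - L) + 2 * t - t * L"
    using P by (simp add: algebra_simps)
  have P_bounds: "0 \<le> P" "P \<le> 5 * t"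
    using P_eq L tL(1) tL_nonneg distrib_right[of t 1 L] by linarith+
  have bounds: "0 < t" "0 < L" "L \<le> 1" "1 - L \<le> 3 * t" "(t + 1) * L \<le> 1"
    "0 \<le> A" "A \<le> 1" "A \<le> 3 * t" "0 \<le> P" "P \<le> 5 * t"
    using t L tL A A_le P_bounds by linarith+
  define X Y Z W where "X = 2 * (1 - L) * P * A" and "Y = (2 - L) * A^2"
    and "Z = 2 * ((t + 1) * L) * (1 - L) * A" and "W = 2 * L * P^2"
  have "0 \<le> X" "0 \<le> Y" "0 \<le> Z" "0 \<le> W"
    unfolding X_def Y_def Z_def W_def using bounds by simp_all
  moreover have "X \<le> 2 * (3 * t) * (5 * t) * 1"
    unfolding X_def using bounds by (intro mult_mono) simp_all
  moreover have "Y \<le> 2 * (3 * t)^2"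
    unfolding Y_def using bounds by (intro mult_mono power_mono) simp_all
  moreover have "Z \<le> 2 * 1 * (3 * t) * (3 * t)"
    unfolding Z_def using bounds by (intro mult_mono) simp_all
  moreover have "W \<le> 2 * 1 * (5 * t)^2"
    unfolding W_def using bounds by (intro mult_mono power_mono) simp_all
  moreover have "-2 * (1 - L) * P * A + (2 - L) * A^2 + 2 * (t + 1) * L * (1 - L) * A - 2 * L * P^2
      = (Y + Z) - (X + W)"
    unfolding X_def Y_def Z_def W_def by (simp add: algebra_simps)
  ultimately show ?thesis
    by (simp add: abs_le_iff power2_eq_square)
qed

lemma jJ_d2_bound:
  assumes t: "0 < t"
  shows "\<bar>jJ_d2 t\<bar> \<le> 655360 / t^2 * exp (-3 * t / 2)"
proof -
  define L A P where "L = ell t" and "A = 1 - (t + 1) * L" and "P = (t + 1) * (2 - L) - 1"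
  define E where
    "E = -2 * (1 - L) * P * A + (2 - L) * A^2 + 2 * (t + 1) * L * (1 - L) * A - 2 * L * P^2"
  have L: "0 < L" "1 - L \<le> 3 * t" and A: "0 < A"
    using ell_range[OF t] one_minus_ell_le[OF t] by (simp_all add: L_def A_def)
  have E: "\<bar>E\<bar> \<le> 80 * t^2"
    unfolding E_def by (rule jJ_d2_numerator_bound[OF t L A A_def P_def])
  have "\<bar>jJ_d2 t\<bar> = \<bar>E\<bar> / 2 * (L / A^4)"
    using L A by (simp add: jJ_d2_def Let_def E_def flip: L_def A_def P_def) (simp add: abs_mult)
  also have "\<dots> \<le> 80 * t^2 / 2 * (4 * 16^4 / (2 * t)^4 * exp (-3 * t / 2))"
    using ell_div_gap_power_le[OF t, of 4] E L A t
    by (intro mult_mono) (simp_all add: L_def A_def)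
  also have "\<dots> = 655360 / t^2 * exp (-3 * t / 2)"
    using t by (simp add: field_simps power2_eq_square power4_eq_xxxx)
  finally show ?thesis .
qed

lemma fF_taylor_bound:
  assumes \<theta>: "0 < \<theta>" and \<delta>: "\<bar>\<delta>\<bar> \<le> \<theta> / 3"
  shows "\<bar>fF (\<theta> + \<delta>) - fF \<theta> - \<delta> * deriv fF \<theta> - \<delta>^2/2 * deriv (deriv fF) \<theta>\<bar>
    \<le> 4536 * \<theta> powr (-2) * \<bar>\<delta>\<bar>^3 * exp (-\<theta>)"
proof -
  let ?f = "(!) [fF, fF_d1, fF_d2, fF_d3]"
  have chain: "(?f m has_real_derivative ?f (Suc m) t) (at t)" if "m < 3" "0 < t" for m t
    using that fF_has_derivative fF_d1_has_derivative fF_d2_has_derivative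
    by (auto simp: numeral_3_eq_3 less_Suc_eq)
  have bound: "\<bar>?f 3 t\<bar> \<le> 12096 / t^2 * exp (-3 * t / 2)" if "0 < t" for t
    using fF_d3_bound[OF that] by (simp add: numeral_3_eq_3)
  have "\<bar>fF (\<theta> + \<delta>) - fF \<theta> - \<delta> * deriv fF \<theta> - \<delta>^2/2 * deriv (deriv fF) \<theta>\<bar>
      = \<bar>?f 0 (\<theta> + \<delta>) - (\<Sum>m<3. ?f m \<theta> / fact m * \<delta>^m)\<bar>"
    using deriv_fF[OF \<theta>] deriv_deriv_fF[OF \<theta>] by (simp add: eval_nat_numeral algebra_simps)
  also have "\<dots> \<le> 9/4 * 12096 / fact 3 * \<theta> powr (-2) * \<bar>\<delta>\<bar>^3 * exp (-\<theta>)"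
    by (rule taylor_remainder_bound[OF _ chain bound \<theta> \<delta>]) simp_all
  also have "\<dots> = 4536 * \<theta> powr (-2) * \<bar>\<delta>\<bar>^3 * exp (-\<theta>)"
    by (simp add: fact_numeral)
  finally show ?thesis .
qed

lemma jJ_taylor_bound:
  assumes \<theta>: "0 < \<theta>" and \<delta>: "\<bar>\<delta>\<bar> \<le> \<theta> / 3"
  shows "\<bar>jJ (\<theta> + \<delta>) - jJ \<theta> - \<delta> * deriv jJ \<theta>\<bar> \<le> 737280 * \<theta> powr (-2) * \<delta>^2 * exp (-\<theta>)"
proof -
  let ?j = "(!) [jJ, jJ_d1, jJ_d2]"
  have chain: "(?j m has_real_derivative ?j (Suc m) t) (at t)" if "m < 2" "0 < t" for m t
    using that jJ_has_derivative jJ_d1_has_derivative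
    by (auto simp: numeral_2_eq_2 less_Suc_eq)
  have bound: "\<bar>?j 2 t\<bar> \<le> 655360 / t^2 * exp (-3 * t / 2)" if "0 < t" for t
    using jJ_d2_bound[OF that] by (simp add: numeral_2_eq_2)
  have "\<bar>jJ (\<theta> + \<delta>) - jJ \<theta> - \<delta> * deriv jJ \<theta>\<bar> = \<bar>?j 0 (\<theta> + \<delta>) - (\<Sum>m<2. ?j m \<theta> / fact m * \<delta>^m)\<bar>"
    using deriv_jJ[OF \<theta>] by (simp add: eval_nat_numeral algebra_simps)
  also have "\<dots> \<le> 9/4 * 655360 / fact 2 * \<theta> powr (-2) * \<bar>\<delta>\<bar>^2 * exp (-\<theta>)"
    by (rule taylor_remainder_bound[OF _ chain bound \<theta> \<delta>]) simp_all
  also have "\<dots> = 737280 * \<theta> powr (-2) * \<delta>^2 * exp (-\<theta>)"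
    by simp
  finally show ?thesis .
qed

theorem lemma3:
  shows "\<exists>C>0. \<forall>\<theta>>0. \<forall>\<delta>::real. \<bar>\<delta>\<bar> \<le> \<theta>/3 \<longrightarrow>
     \<bar>fF (\<theta>+\<delta>) - fF \<theta> - \<delta> * deriv fF \<theta> - \<delta>^2/2 * deriv (deriv fF) \<theta>\<bar>
        \<le> C * \<theta> powr (-2) * \<bar>\<delta>\<bar>^3 * exp (-\<theta>) \<and>
     \<bar>jJ (\<theta>+\<delta>) - jJ \<theta> - \<delta> * deriv jJ \<theta>\<bar>
        \<le> C * \<theta> powr (-2) * \<delta>^2 * exp (-\<theta>)"
proof (intro exI[of _ "10^6"] conjI allI impI)
  fix \<theta> \<delta> :: real
  assume \<theta>: "0 < \<theta>" and \<delta>: "\<bar>\<delta>\<bar> \<le> \<theta>/3"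
  have "4536 * \<theta> powr (-2) * \<bar>\<delta>\<bar>^3 * exp (-\<theta>) \<le> 10^6 * \<theta> powr (-2) * \<bar>\<delta>\<bar>^3 * exp (-\<theta>)"
    by (intro mult_right_mono) simp_all
  with fF_taylor_bound[OF \<theta> \<delta>]
  show "\<bar>fF (\<theta>+\<delta>) - fF \<theta> - \<delta> * deriv fF \<theta> - \<delta>^2/2 * deriv (deriv fF) \<theta>\<bar>
      \<le> 10^6 * \<theta> powr (-2) * \<bar>\<delta>\<bar>^3 * exp (-\<theta>)"
    by linarith
  have "737280 * \<theta> powr (-2) * \<delta>^2 * exp (-\<theta>) \<le> 10^6 * \<theta> powr (-2) * \<delta>^2 * exp (-\<theta>)"
    by (intro mult_right_mono) simp_all
  with jJ_taylor_bound[OF \<theta> \<delta>]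
  show "\<bar>jJ (\<theta>+\<delta>) - jJ \<theta> - \<delta> * deriv jJ \<theta>\<bar> \<le> 10^6 * \<theta> powr (-2) * \<delta>^2 * exp (-\<theta>)"
    by linarith
qed simp

end
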